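(* Let $A\in\mathbb{R}^{n\times n}$, let $\lambda\in\mathbb{R}$, and let $v\in\mathbb{R}^{n\times1}$ and $u\in\mathbb{R}^{1\times n}$ satisfy $Av=\lambda v$, $uA=\lambda u$ and $uv=1$. Then for every row vector $u'\in\mathbb{R}^{1\times n}$ with $u'v=1$, the matrix $\lambda vu'+(I-vu')A$ is conjugate (similar) to $A$, and for every integer $k\ge 0$, \[\bigl(\lambda vu'+(I-vu')A\bigr)^k=\lambda^k vu'+(I-vu')A^k,\] where $I$ is the $n\times n$ identity matrix. *)

theory Defs
  imports "Jordan_Normal_Form.Matrix"
begin

end

theory Submission
  imports Defs
begin

text \<open>
  Put \<open>N = v (u' - u)\<close>. Since \<open>u' v = u v\<close>, \<open>N\<^sup>2 = 0\<close>, so \<open>1 - N\<close> and \<open>1 + N\<close> are mutually inverse.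
  For every matrix \<open>M\<close> having \<open>v\<close> as right and \<open>u\<close> as left eigenvector to the same eigenvalue
  \<open>c\<close>, expanding \<open>(1 - N) M (1 + N)\<close> gives \<open>c v u' + (1 - v u') M\<close>. With \<open>M = A\<close> this exhibits the
  similarity; with \<open>M = A\<^sup>k\<close>, \<open>c = \<lambda>\<^sup>k\<close> it gives the power formula, because conjugation commutes
  with taking powers.
\<close>

lemma mat_pow_mult_eigenvector:
  fixes A :: "'a :: comm_ring_1 mat"
  assumes A: "A \<in> carrier_mat n n" and v: "v \<in> carrier_mat n m" and Av: "A * v = c \<cdot>\<^sub>m v"
  shows "A ^\<^sub>m k * v = c ^ k \<cdot>\<^sub>m v"
proof (induction k)
  case 0
  then show ?case using A v by (auto intro!: eq_matI)
next
  case (Suc k)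
  have "A ^\<^sub>m Suc k * v = A ^\<^sub>m k * (A * v)"
    using A v by (simp add: assoc_mult_mat[of _ n n _ n _ m])
  also have "\<dots> = c \<cdot>\<^sub>m (A ^\<^sub>m k * v)"
    using A v by (simp add: Av mult_smult_distrib[of _ n n _ m])
  also have "\<dots> = c ^ Suc k \<cdot>\<^sub>m v"
    by (rule eq_matI) (auto simp: Suc)
  finally show ?case .
qed

lemma eigenrow_mult_mat_pow:
  fixes A :: "'a :: comm_ring_1 mat"
  assumes A: "A \<in> carrier_mat n n" and u: "u \<in> carrier_mat m n" and uA: "u * A = c \<cdot>\<^sub>m u"
  shows "u * A ^\<^sub>m k = c ^ k \<cdot>\<^sub>m u"
proof (induction k)
  case 0
  then show ?case using A u by (auto intro!: eq_matI)
next
  case (Suc k)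
  have "u * A ^\<^sub>m Suc k = (u * A ^\<^sub>m k) * A"
    using A u by (simp add: assoc_mult_mat[of _ m n _ n _ n])
  also have "\<dots> = c ^ k \<cdot>\<^sub>m (u * A)"
    using A u by (simp add: Suc mult_smult_assoc_mat[of _ m n _ n])
  also have "\<dots> = c ^ Suc k \<cdot>\<^sub>m u"
    by (rule eq_matI) (auto simp: uA)
  finally show ?case .
qed

lemma outer_diff_square_zero:
  fixes v u u' :: "'a :: comm_ring_1 mat"
  assumes v: "v \<in> carrier_mat n m" and u: "u \<in> carrier_mat m n" and u': "u' \<in> carrier_mat m n"
    and u'v: "u' * v = u * v"
  shows "(v * (u' - u)) * (v * (u' - u)) = 0\<^sub>m n n"
proof -
  define w where "w = u' - u"
  have w: "w \<in> carrier_mat m n"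
    using u u' by (simp add: w_def minus_carrier_mat)
  have wv: "w * v = 0\<^sub>m m m"
    using u u' v by (auto simp: w_def minus_mult_distrib_mat[OF u' u v] u'v intro!: eq_matI)
  have "(v * w) * (v * w) = v * (w * (v * w))"
    using v w by (intro assoc_mult_mat) auto
  also have "\<dots> = v * ((w * v) * w)"
    using v w by (simp add: assoc_mult_mat[OF w v w])
  also have "\<dots> = 0\<^sub>m n n"
    using v w by (simp add: wv)
  finally show ?thesis
    unfolding w_def .
qed

lemma square_zero_mat_inverse:
  fixes N :: "'a :: comm_ring_1 mat"
  assumes N: "N \<in> carrier_mat n n" and NN: "N * N = 0\<^sub>m n n"
  shows "(1\<^sub>m n - N) * (1\<^sub>m n + N) = 1\<^sub>m n" and "(1\<^sub>m n + N) * (1\<^sub>m n - N) = 1\<^sub>m n"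
proof -
  have carrier: "1\<^sub>m n - N \<in> carrier_mat n n" "1\<^sub>m n + N \<in> carrier_mat n n"
    using N by auto
  have "(1\<^sub>m n - N) * (1\<^sub>m n + N) = (1\<^sub>m n - N) + (N - N * N)"
    using N carrier
    by (simp add: mult_add_distrib_mat[OF carrier(1) one_carrier_mat N]
        minus_mult_distrib_mat[OF one_carrier_mat N N])
  then show "(1\<^sub>m n - N) * (1\<^sub>m n + N) = 1\<^sub>m n"
    using N by (auto simp: NN intro!: eq_matI)
  have "(1\<^sub>m n + N) * (1\<^sub>m n - N) = (1\<^sub>m n + N) - (N + N * N)"
    using N carrier
    by (simp add: mult_minus_distrib_mat[OF carrier(2) one_carrier_mat N]
        add_mult_distrib_mat[OF one_carrier_mat N N])
  then show "(1\<^sub>m n + N) * (1\<^sub>m n - N) = 1\<^sub>m n"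
    using N by (auto simp: NN intro!: eq_matI)
qed

lemma one_minus_mult_one_plus_mat:
  fixes M N :: "'a :: comm_ring_1 mat"
  assumes M: "M \<in> carrier_mat n n" and N: "N \<in> carrier_mat n n"
  shows "(1\<^sub>m n - N) * M * (1\<^sub>m n + N) = (M - N * M) + (M * N - N * M * N)"
proof -
  have MNM: "M - N * M \<in> carrier_mat n n"
    using M N by (simp add: minus_carrier_mat)
  have "(1\<^sub>m n - N) * M * (1\<^sub>m n + N) = (M - N * M) * (1\<^sub>m n + N)"
    using M N by (simp add: minus_mult_distrib_mat[OF one_carrier_mat N M])
  also have "\<dots> = (M - N * M) + (M * N - N * M * N)"
    using M N MNM
    by (simp add: mult_add_distrib_mat[OF MNM one_carrier_mat N] minus_mult_distrib_mat[OF M _ N])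
  finally show ?thesis .
qed

lemma outer_diff_conjugation:
  fixes M v u u' :: "'a :: comm_ring_1 mat"
  assumes M: "M \<in> carrier_mat n n" and v: "v \<in> carrier_mat n m"
    and u: "u \<in> carrier_mat m n" and u': "u' \<in> carrier_mat m n"
    and Mv: "M * v = c \<cdot>\<^sub>m v" and uM: "u * M = c \<cdot>\<^sub>m u" and u'v: "u' * v = u * v"
  shows "(1\<^sub>m n - v * (u' - u)) * M * (1\<^sub>m n + v * (u' - u))
           = c \<cdot>\<^sub>m (v * u') + (1\<^sub>m n - v * u') * M"
proof -
  define w where "w = u' - u"
  define N where "N = v * w"
  have w: "w \<in> carrier_mat m n" and N: "N \<in> carrier_mat n n"
    using v u u' by (auto simp: w_def N_def)
  have MN: "M * N = c \<cdot>\<^sub>m N"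
  proof -
    have "M * N = (M * v) * w"
      using M v w by (simp add: N_def assoc_mult_mat[OF M v w])
    then show ?thesis
      using v w by (simp add: Mv N_def mult_smult_assoc_mat[OF v w])
  qed
  have NM: "N * M = v * u' * M - c \<cdot>\<^sub>m (v * u)"
  proof -
    have "N * M = v * (w * M)"
      using M v w by (simp add: N_def assoc_mult_mat[OF v w M])
    also have "\<dots> = v * (u' * M - c \<cdot>\<^sub>m u)"
      by (simp add: w_def minus_mult_distrib_mat[OF u' u M] uM)
    also have "\<dots> = v * u' * M - c \<cdot>\<^sub>m (v * u)"
      using M v u u'
      by (simp add: mult_minus_distrib_mat[OF v mult_carrier_mat[OF u' M] smult_carrier_mat[OF u]]
          assoc_mult_mat[OF v u' M] mult_smult_distrib[OF v u])
    finally show ?thesis .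
  qed
  have NMN: "N * M * N = 0\<^sub>m n n"
  proof -
    have "N * M * N = c \<cdot>\<^sub>m (N * N)"
      using M N by (simp add: MN assoc_mult_mat[OF N M N] mult_smult_distrib[OF N N])
    then show ?thesis
      using outer_diff_square_zero[OF v u u' u'v] by (simp add: N_def w_def)
  qed
  have "(1\<^sub>m n - v * u') * M = M - v * u' * M"
    using M v u' by (simp add: minus_mult_distrib_mat[OF one_carrier_mat _ M])
  moreover have "N = v * u' - v * u"
    using v u u' by (simp add: N_def w_def mult_minus_distrib_mat[OF v u' u])
  ultimately have "(M - N * M) + (M * N - N * M * N) = c \<cdot>\<^sub>m (v * u') + (1\<^sub>m n - v * u') * M"
    unfolding NMN unfolding NM MN using M v u u' by (auto simp: algebra_simps intro!: eq_matI)
  then show ?thesis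
    using one_minus_mult_one_plus_mat[OF M N] by (simp add: N_def w_def)
qed

theorem lemma4p3:
  fixes A :: "real mat" and v u :: "real mat" and lam :: real and n :: nat
  assumes A: "A \<in> carrier_mat n n"
    and v: "v \<in> carrier_mat n 1"
    and u: "u \<in> carrier_mat 1 n"
    and Av: "A * v = lam \<cdot>\<^sub>m v"
    and uA: "u * A = lam \<cdot>\<^sub>m u"
    and uv: "u * v = 1\<^sub>m 1"
  shows "\<forall>u' \<in> carrier_mat 1 n. u' * v = 1\<^sub>m 1 \<longrightarrow>
           similar_mat (lam \<cdot>\<^sub>m (v * u') + (1\<^sub>m n - v * u') * A) A \<and>
           (\<forall>k::nat. (lam \<cdot>\<^sub>m (v * u') + (1\<^sub>m n - v * u') * A) ^\<^sub>m k
                      = lam ^ k \<cdot>\<^sub>m (v * u') + (1\<^sub>m n - v * u') * (A ^\<^sub>m k))"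
proof (intro ballI impI)
  fix u' assume u': "u' \<in> carrier_mat 1 n" and "u' * v = 1\<^sub>m 1"
  with uv have u'v: "u' * v = u * v" by simp
  define N where "N = v * (u' - u)"
  define B where "B = lam \<cdot>\<^sub>m (v * u') + (1\<^sub>m n - v * u') * A"
  have N: "N \<in> carrier_mat n n" and B: "B \<in> carrier_mat n n"
    using A v u u' by (auto simp: N_def B_def minus_carrier_mat)
  have NN: "N * N = 0\<^sub>m n n"
    unfolding N_def by (rule outer_diff_square_zero[OF v u u' u'v])
  have wit: "similar_mat_wit B A (1\<^sub>m n - N) (1\<^sub>m n + N)"
  proof (rule similar_mat_witI)
    show "(1\<^sub>m n - N) * (1\<^sub>m n + N) = 1\<^sub>m n" "(1\<^sub>m n + N) * (1\<^sub>m n - N) = 1\<^sub>m n"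
      by (rule square_zero_mat_inverse[OF N NN])+
    show "B = (1\<^sub>m n - N) * A * (1\<^sub>m n + N)"
      unfolding B_def N_def by (rule outer_diff_conjugation[OF A v u u' Av uA u'v, symmetric])
  qed (use A B N in \<open>auto simp: minus_carrier_mat\<close>)
  have "B ^\<^sub>m k = lam ^ k \<cdot>\<^sub>m (v * u') + (1\<^sub>m n - v * u') * A ^\<^sub>m k" for k
    unfolding similar_mat_wit_pow_id[OF wit] N_def
    by (rule outer_diff_conjugation[OF pow_carrier_mat[OF A] v u u'
          mat_pow_mult_eigenvector[OF A v Av] eigenrow_mult_mat_pow[OF A u uA] u'v])
  with wit show "similar_mat B A \<and> (\<forall>k. B ^\<^sub>m k = lam ^ k \<cdot>\<^sub>m (v * u') + (1\<^sub>m n - v * u') * A ^\<^sub>m k)"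
    unfolding similar_mat_def by blast
qed

end
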